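(* Let $J$ be a finite set with $|J|$ even. Then $\mathrm{EvenNAE}_J$ has a 2-decomposition.
   Context: $\mathrm{EvenNAE}_J:\{0,1\}^J\to\{0,1\}$ takes value $1$ exactly on those $x$ with $\sum_{i\in J}x_i$ even and $1\le\sum_{i\in J}x_i\le|J|-1$. For $x\in\{0,1\}^J$ and $S\subseteq J$, $x\oplus\mathbf S$ is $x$ with the coordinates in $S$ flipped. A function $H:\{0,1\}^J\to\mathbb{Q}_{\ge0}$ has a 2-decomposition if there are values $D(x,M)\ge0$, for $x\in\{0,1\}^J$ and $M$ ranging over partitions of $J$ into pairs, with $H(x)=\sum_MD(x,M)$ for all $x$ and $D(x\oplus\mathbf S,M)=D(x,M)$ for all $x,M$ and $S\in M$. *)

theory Defs
  imports Main "HOL.Rat"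
begin

text \<open>Points of {0,1}^J: boolean functions that are False outside J.\<close>
definition cube :: "'a set \<Rightarrow> ('a \<Rightarrow> bool) set" where
  "cube J = {x. \<forall>i. i \<notin> J \<longrightarrow> \<not> x i}"

definition weight :: "'a set \<Rightarrow> ('a \<Rightarrow> bool) \<Rightarrow> nat" where
  "weight J x = card {i \<in> J. x i}"

definition EvenNAE :: "'a set \<Rightarrow> ('a \<Rightarrow> bool) \<Rightarrow> rat" where
  "EvenNAE J x = (if even (weight J x) \<and> 1 \<le> weight J x \<and> weight J x \<le> card J - 1
                  then 1 else 0)"

definition flip :: "('a \<Rightarrow> bool) \<Rightarrow> 'a set \<Rightarrow> ('a \<Rightarrow> bool)" where
  "flip x S = (\<lambda>i. if i \<in> S then \<not> x i else x i)"

definition pair_partitions :: "'a set \<Rightarrow> 'a set set set" where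
  "pair_partitions J = {M. \<Union>M = J \<and> (\<forall>S\<in>M. card S = 2)
      \<and> (\<forall>S\<in>M. \<forall>T\<in>M. S \<noteq> T \<longrightarrow> S \<inter> T = {})}"

definition has_2_decomposition :: "'a set \<Rightarrow> (('a \<Rightarrow> bool) \<Rightarrow> rat) \<Rightarrow> bool" where
  "has_2_decomposition J H \<longleftrightarrow>
     (\<exists>D :: ('a \<Rightarrow> bool) \<Rightarrow> 'a set set \<Rightarrow> rat.
        (\<forall>x\<in>cube J. \<forall>M\<in>pair_partitions J. D x M \<ge> 0)
      \<and> (\<forall>x\<in>cube J. H x = (\<Sum>M\<in>pair_partitions J. D x M))
      \<and> (\<forall>x\<in>cube J. \<forall>M\<in>pair_partitions J. \<forall>S\<in>M. D (flip x S) M = D x M))"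

end

theory Submission
  imports Defs
begin

text \<open>
  Let \<open>k(x, M)\<close> be the number of pairs of \<open>M\<close> on which \<open>x\<close> is not constant. It is unchanged
  when \<open>x\<close> is flipped on a pair of \<open>M\<close>, and it has the parity of the weight of \<open>x\<close>. So
  \<open>D(x, M) = (1 - c\<^sub>k) / #pairings\<close> for even \<open>k = k(x, M)\<close> and \<open>D(x, M) = 0\<close> otherwise is a
  flip-invariant candidate, which vanishes on the constant points because \<open>c\<^sub>0 = 1\<close>. It sums
  to \<open>EvenNAE\<close> provided \<open>\<Sum>\<^sub>M c\<^bsub>k(x, M)\<^esub> = 0\<close> for every non-constant \<open>x\<close>, and is nonnegative if
  \<open>|c\<^sub>k| \<le> 1\<close>. Pick \<open>a\<close>, \<open>z\<close> with \<open>x a \<noteq> x z\<close>: every pairing of \<open>J\<close> either contains \<open>{a, z}\<close>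
  or arises exactly once from a pairing \<open>M\<close> of \<open>J - {a, z}\<close> by replacing one of its pairs
  \<open>{b, d}\<close> by \<open>{a, b}, {z, d}\<close>. Grouping the sum accordingly, the contribution of each \<open>M\<close>
  vanishes as soon as (with \<open>n = |J|\<close>) \<open>(n - 1 - k) c\<^bsub>k+1\<^esub> + k c\<^bsub>k-1\<^esub> = 0\<close>, and this recurrence has a solution
  with \<open>c\<^sub>0 = 1\<close> and \<open>|c\<^sub>k| \<le> 1\<close> for \<open>2k \<le> n\<close>.
\<close>

lemma pair_partitionsI:
  assumes "\<Union>M = J" "\<And>S. S \<in> M \<Longrightarrow> card S = 2"
    "\<And>S T. S \<in> M \<Longrightarrow> T \<in> M \<Longrightarrow> S \<noteq> T \<Longrightarrow> S \<inter> T = {}"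
  shows "M \<in> pair_partitions J"
  using assms unfolding pair_partitions_def by auto

lemma pair_partition_Union: "M \<in> pair_partitions J \<Longrightarrow> \<Union>M = J"
  unfolding pair_partitions_def by blast

lemma pair_partition_card_block: "M \<in> pair_partitions J \<Longrightarrow> S \<in> M \<Longrightarrow> card S = 2"
  unfolding pair_partitions_def by blast

lemma pair_partition_disjoint:
  "M \<in> pair_partitions J \<Longrightarrow> S \<in> M \<Longrightarrow> T \<in> M \<Longrightarrow> S \<noteq> T \<Longrightarrow> S \<inter> T = {}"
  unfolding pair_partitions_def by blast

lemma pair_partition_block_unique:
  "M \<in> pair_partitions J \<Longrightarrow> S \<in> M \<Longrightarrow> T \<in> M \<Longrightarrow> i \<in> S \<Longrightarrow> i \<in> T \<Longrightarrow> S = T"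
  using pair_partition_disjoint by blast

lemma finite_pair_partition_block: "M \<in> pair_partitions J \<Longrightarrow> S \<in> M \<Longrightarrow> finite S"
  using pair_partition_card_block card_ge_0_finite by fastforce

lemma finite_pair_partition: "finite J \<Longrightarrow> M \<in> pair_partitions J \<Longrightarrow> finite M"
  by (metis pair_partition_Union finite_UnionD)

lemma finite_pair_partitions: "finite J \<Longrightarrow> finite (pair_partitions J)"
  unfolding pair_partitions_def by (rule finite_subset[of _ "Pow (Pow J)"]) auto

lemma card_pair_partition:
  assumes "finite J" "M \<in> pair_partitions J"
  shows "card J = 2 * card M"
proof -
  have "card J = sum card M"
    unfolding pair_partition_Union[OF assms(2), symmetric]
    using finite_pair_partition_block[OF assms(2)] pair_partition_disjoint[OF assms(2)]
    by (intro card_Union_disjoint) (auto simp: pairwise_def disjnt_def)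
  then show ?thesis using pair_partition_card_block[OF assms(2)] by simp
qed

lemma pair_partitions_Un:
  assumes "M \<in> pair_partitions A" "N \<in> pair_partitions B" "A \<inter> B = {}"
  shows "M \<union> N \<in> pair_partitions (A \<union> B)"
proof (rule pair_partitionsI)
  have U: "\<Union>M = A" "\<Union>N = B"
    using pair_partition_Union[OF assms(1)] pair_partition_Union[OF assms(2)] .
  then show "\<Union>(M \<union> N) = A \<union> B" by simp
  show "card S = 2" if "S \<in> M \<union> N" for S
    using that pair_partition_card_block[OF assms(1)] pair_partition_card_block[OF assms(2)]
    by blast
  show "S \<inter> T = {}" if "S \<in> M \<union> N" "T \<in> M \<union> N" "S \<noteq> T" for S T
    using that U assms(3) pair_partition_disjoint[OF assms(1)] pair_partition_disjoint[OF assms(2)]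
    by blast
qed

lemma pair_partitions_Diff:
  assumes "M \<in> pair_partitions A" "N \<subseteq> M"
  shows "M - N \<in> pair_partitions (A - \<Union>N)"
proof (rule pair_partitionsI)
  show "\<Union>(M - N) = A - \<Union>N"
    using assms(2) pair_partition_Union[OF assms(1)] pair_partition_disjoint[OF assms(1)]
    by blast
  show "card S = 2" if "S \<in> M - N" for S
    using that pair_partition_card_block[OF assms(1)] by blast
  show "S \<inter> T = {}" if "S \<in> M - N" "T \<in> M - N" "S \<noteq> T" for S T
    using that pair_partition_disjoint[OF assms(1)] by blast
qed

lemma pair_partition_block_at:
  assumes "M \<in> pair_partitions J" "S \<in> M" "b \<in> S"
  obtains d where "d \<noteq> b" "S = {b, d}"
proof -
  obtain p q where "p \<noteq> q" "S = {p, q}"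
    using pair_partition_card_block[OF assms(1,2)] by (auto simp: card_2_iff)
  then show thesis using that assms(3) by (metis empty_iff insertE insert_commute)
qed

lemma pair_partitions_doubleton: "a \<noteq> b \<Longrightarrow> {{a, b}} \<in> pair_partitions {a, b}"
  unfolding pair_partitions_def by simp

lemma insert_pair_in_pair_partitions:
  assumes "M \<in> pair_partitions (J - {a, z})" "a \<noteq> z" "a \<in> J" "z \<in> J"
  shows "insert {a, z} M \<in> pair_partitions J"
proof -
  have "{{a, z}} \<union> M \<in> pair_partitions ({a, z} \<union> (J - {a, z}))"
    using assms by (intro pair_partitions_Un pair_partitions_doubleton) auto
  moreover have "{a, z} \<union> (J - {a, z}) = J" using assms by blast
  ultimately show ?thesis by simp
qed

lemma pair_partitions_nonempty:
  "finite J \<Longrightarrow> even (card J) \<Longrightarrow> pair_partitions J \<noteq> {}"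
proof (induction "card J" arbitrary: J rule: less_induct)
  case less
  show ?case
  proof (cases "J = {}")
    case True
    then have "{} \<in> pair_partitions J" unfolding pair_partitions_def by simp
    then show ?thesis by blast
  next
    case False
    with less.prems have "card J \<noteq> 0" "card J \<noteq> 1" by auto
    then have "card J \<ge> 2" by linarith
    then obtain a b where ab: "a \<in> J" "b \<in> J" "a \<noteq> b"
      by (auto simp: card_le_Suc_iff numeral_2_eq_2)
    then have "card (J - {a, b}) = card J - 2"
      using less.prems(1) by (simp add: card_Diff_subset)
    then have "card (J - {a, b}) < card J" "even (card (J - {a, b}))"
      using less.prems(2) \<open>card J \<ge> 2\<close> by auto
    then obtain M where "M \<in> pair_partitions (J - {a, b})"
      using less.hyps less.prems(1) by blast
    then have "insert {a, b} M \<in> pair_partitions J"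
      using ab by (intro insert_pair_in_pair_partitions)
    then show ?thesis by blast
  qed
qed

text \<open>For \<open>S = {b, d}\<close>, the pair \<open>S\<close> of \<open>M\<close> is replaced by \<open>{a, b}\<close> and \<open>{z, d}\<close>.\<close>

definition rewire :: "'a \<Rightarrow> 'a \<Rightarrow> 'a set set \<Rightarrow> 'a set \<Rightarrow> 'a \<Rightarrow> 'a set set" where
  "rewire a z M S b = insert {a, b} (insert (insert z (S - {b})) (M - {S}))"

lemma rewire_doubleton:
  "b \<noteq> d \<Longrightarrow> rewire a z M {b, d} b = insert {a, b} (insert {z, d} (M - {{b, d}}))"
  unfolding rewire_def by (simp add: insert_Diff_if)

lemma rewire_in_pair_partitions:
  assumes M: "M \<in> pair_partitions (J - {a, z})" "S \<in> M" "b \<in> S"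
    and az: "a \<noteq> z" "a \<in> J" "z \<in> J"
  shows "rewire a z M S b \<in> pair_partitions J" and "{a, z} \<notin> rewire a z M S b"
proof -
  obtain d where d: "d \<noteq> b" "S = {b, d}" using pair_partition_block_at[OF M] .
  have bdJ: "{b, d} \<subseteq> J - {a, z}" using M(2) d(2) pair_partition_Union[OF M(1)] by blast
  have "{{a, b}} \<union> {{z, d}} \<in> pair_partitions ({a, b} \<union> {z, d})"
    using az d bdJ by (intro pair_partitions_Un pair_partitions_doubleton) auto
  moreover have "M - {S} \<in> pair_partitions (J - {a, z} - S)"
    using pair_partitions_Diff[OF M(1), of "{S}"] M(2) by simp
  ultimately have "({{a, b}} \<union> {{z, d}}) \<union> (M - {S})
      \<in> pair_partitions (({a, b} \<union> {z, d}) \<union> (J - {a, z} - S))"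
    by (rule pair_partitions_Un) (use d(2) in auto)
  moreover have "({a, b} \<union> {z, d}) \<union> (J - {a, z} - S) = J" using az bdJ d(2) by blast
  ultimately show "rewire a z M S b \<in> pair_partitions J"
    using d by (simp add: rewire_doubleton insert_commute)
  have "\<forall>T\<in>M. a \<notin> T" using pair_partition_Union[OF M(1)] by blast
  then show "{a, z} \<notin> rewire a z M S b"
    using d bdJ \<open>a \<noteq> z\<close> by (auto simp: rewire_doubleton doubleton_eq_iff)
qed

lemma inj_on_rewire:
  assumes az: "a \<noteq> z" "a \<in> J" "z \<in> J"
  shows "inj_on (\<lambda>(M, S, b). rewire a z M S b) (SIGMA M:pair_partitions (J - {a, z}). SIGMA S:M. S)"
proof (rule inj_onI, clarsimp)
  fix M1 S1 b1 M2 S2 b2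
  assume M1: "M1 \<in> pair_partitions (J - {a, z})" "S1 \<in> M1" "b1 \<in> S1"
    and M2: "M2 \<in> pair_partitions (J - {a, z})" "S2 \<in> M2" "b2 \<in> S2"
    and eq: "rewire a z M1 S1 b1 = rewire a z M2 S2 b2"
  obtain d1 d2 where d1: "d1 \<noteq> b1" "S1 = {b1, d1}" and d2: "d2 \<noteq> b2" "S2 = {b2, d2}"
    using pair_partition_block_at M1 M2 by metis
  define R where "R = rewire a z M1 S1 b1"
  have R: "R \<in> pair_partitions J"
    unfolding R_def using rewire_in_pair_partitions(1)[OF M1 az] .
  have outside: "a \<notin> T" "z \<notin> T" if "T \<in> M1 \<union> M2" for T
    using that Union_upper[of T M1] Union_upper[of T M2]
    unfolding pair_partition_Union[OF M1(1)] pair_partition_Union[OF M2(1)] by blast+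
  have R1: "R = insert {a, b1} (insert {z, d1} (M1 - {S1}))"
    unfolding R_def using d1 by (simp add: rewire_doubleton)
  have R2: "R = insert {a, b2} (insert {z, d2} (M2 - {S2}))"
    unfolding R_def eq using d2 by (simp add: rewire_doubleton)
  have "{a, b1} \<in> R" "{z, d1} \<in> R" by (simp_all add: R1)
  moreover have "{a, b2} \<in> R" "{z, d2} \<in> R" by (simp_all add: R2)
  ultimately have "{a, b1} = {a, b2}" "{z, d1} = {z, d2}"
    using pair_partition_block_unique[OF R] by blast+
  moreover have "b1 \<noteq> a" "d2 \<noteq> z" using outside M1(2,3) M2(2) d2(2) by auto
  ultimately have b: "b1 = b2" and d: "d1 = d2" by (auto simp: doubleton_eq_iff)
  then have S: "S1 = S2" using d1 d2 by simp
  have "M1 - {S1} = R - {{a, b1}, {z, d1}}"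
    unfolding R1 using outside by auto
  moreover have "M2 - {S2} = R - {{a, b2}, {z, d2}}"
    unfolding R2 using outside by auto
  ultimately have "M1 - {S1} = M2 - {S1}" using b d S by simp
  then have "M1 = M2" using M1(2) M2(2) S by (metis insert_Diff)
  then show "M1 = M2 \<and> S1 = S2 \<and> b1 = b2" using b S by simp
qed

lemma rewire_surj:
  assumes R: "R \<in> pair_partitions J" "{a, z} \<notin> R" and az: "a \<noteq> z" "a \<in> J" "z \<in> J"
  obtains M S b where "M \<in> pair_partitions (J - {a, z})" "S \<in> M" "b \<in> S"
    "R = rewire a z M S b"
proof -
  obtain A Z where AZ: "A \<in> R" "a \<in> A" "Z \<in> R" "z \<in> Z"
    using az pair_partition_Union[OF R(1)] by blast
  obtain b d where b: "b \<noteq> a" "A = {a, b}" and d: "d \<noteq> z" "Z = {z, d}"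
    using pair_partition_block_at[OF R(1)] AZ by metis
  have "A \<noteq> Z" using R(2) AZ b az(1) by auto
  then have "A \<inter> Z = {}" using pair_partition_disjoint[OF R(1)] AZ by blast
  then have bd: "b \<noteq> d" "b \<noteq> z" "d \<noteq> a" using b d by auto
  have bdJ: "b \<in> J" "d \<in> J" using AZ b d pair_partition_Union[OF R(1)] by blast+
  define M where "M = {{b, d}} \<union> (R - {A, Z})"
  have "{{b, d}} \<union> (R - {A, Z}) \<in> pair_partitions ({b, d} \<union> (J - \<Union>{A, Z}))"
    using bd AZ b d
    by (intro pair_partitions_Un pair_partitions_doubleton pair_partitions_Diff[OF R(1)]) auto
  moreover have "{b, d} \<union> (J - \<Union>{A, Z}) = J - {a, z}" using b d bd bdJ az by auto
  ultimately have M: "M \<in> pair_partitions (J - {a, z})" unfolding M_def by simp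
  have "{b, d} \<notin> R - {A, Z}"
    using pair_partition_block_unique[OF R(1), of "{b, d}" A b] AZ b by auto
  then have "M - {{b, d}} = R - {A, Z}" unfolding M_def by auto
  then have "rewire a z M {b, d} b = R"
    using bd AZ b d by (auto simp: rewire_doubleton)
  moreover have "{b, d} \<in> M" unfolding M_def by simp
  ultimately show thesis using that M by blast
qed

lemma pair_partitions_eq_insert_pair_Un_rewire:
  assumes az: "a \<noteq> z" "a \<in> J" "z \<in> J"
  shows "pair_partitions J = insert {a, z} ` pair_partitions (J - {a, z})
    \<union> (\<lambda>(M, S, b). rewire a z M S b) ` (SIGMA M:pair_partitions (J - {a, z}). SIGMA S:M. S)"
    (is "_ = ?P1 \<union> ?P2")
proof
  show "pair_partitions J \<subseteq> ?P1 \<union> ?P2"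
  proof
    fix R assume R: "R \<in> pair_partitions J"
    show "R \<in> ?P1 \<union> ?P2"
    proof (cases "{a, z} \<in> R")
      case True
      then have "R = insert {a, z} (R - {{a, z}})" by blast
      moreover have "R - {{a, z}} \<in> pair_partitions (J - {a, z})"
        using pair_partitions_Diff[OF R, of "{{a, z}}"] True by simp
      ultimately show ?thesis by blast
    next
      case False
      then obtain M S b where "M \<in> pair_partitions (J - {a, z})" "S \<in> M" "b \<in> S"
        "R = rewire a z M S b"
        using rewire_surj[OF R _ az] by metis
      then show ?thesis by force
    qed
  qed
  show "?P1 \<union> ?P2 \<subseteq> pair_partitions J"
    using insert_pair_in_pair_partitions[OF _ az] rewire_in_pair_partitions(1)[OF _ _ _ az]
    by auto
qed

lemma sum_pair_partitions_split:
  assumes fin: "finite J" and az: "a \<noteq> z" "a \<in> J" "z \<in> J"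
  shows "(\<Sum>R\<in>pair_partitions J. g R) =
    (\<Sum>M\<in>pair_partitions (J - {a, z}).
       g (insert {a, z} M) + (\<Sum>S\<in>M. \<Sum>b\<in>S. g (rewire a z M S b)))"
proof -
  let ?P = "pair_partitions (J - {a, z})"
  let ?I = "SIGMA M:?P. SIGMA S:M. S"
  let ?h = "\<lambda>(M, S, b). rewire a z M S b"
  have disjoint: "insert {a, z} ` ?P \<inter> ?h ` ?I = {}"
    using rewire_in_pair_partitions(2)[OF _ _ _ az] by auto
  have inj_insert: "inj_on (insert {a, z}) ?P"
  proof (rule inj_onI)
    fix M1 M2 assume "M1 \<in> ?P" "M2 \<in> ?P" "insert {a, z} M1 = insert {a, z} M2"
    moreover have "{a, z} \<notin> M" if "M \<in> ?P" for M using pair_partition_Union[OF that] by blast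
    ultimately show "M1 = M2" by (metis insert_ident)
  qed
  have fin_P: "finite ?P" using fin by (simp add: finite_pair_partitions)
  have fin_blocks: "\<forall>M\<in>?P. finite M \<and> (\<forall>S\<in>M. finite S)"
    using fin finite_pair_partition finite_pair_partition_block by auto
  have fin_I: "finite ?I" using fin_P fin_blocks by (intro finite_SigmaI) auto
  have "(\<Sum>R\<in>pair_partitions J. g R) = sum g (insert {a, z} ` ?P) + sum g (?h ` ?I)"
    unfolding pair_partitions_eq_insert_pair_Un_rewire[OF az]
    using fin_P fin_I disjoint by (intro sum.union_disjoint finite_imageI)
  also have "\<dots> = (\<Sum>M\<in>?P. g (insert {a, z} M)) + (\<Sum>p\<in>?I. g (?h p))"
    by (simp add: sum.reindex[OF inj_insert] sum.reindex[OF inj_on_rewire[OF az]])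
  also have "(\<Sum>p\<in>?I. g (?h p)) = (\<Sum>M\<in>?P. \<Sum>(S, b)\<in>(SIGMA S:M. S). g (rewire a z M S b))"
    using fin_P fin_blocks by (subst sum.Sigma) (auto simp: case_prod_unfold intro!: finite_SigmaI)
  also have "\<dots> = (\<Sum>M\<in>?P. \<Sum>S\<in>M. \<Sum>b\<in>S. g (rewire a z M S b))"
    using fin_blocks by (intro sum.cong refl sum.Sigma[symmetric]) auto
  finally show ?thesis by (simp add: sum.distrib)
qed

definition mixed :: "('a \<Rightarrow> bool) \<Rightarrow> 'a set \<Rightarrow> bool" where
  "mixed x S \<longleftrightarrow> (\<exists>i\<in>S. x i) \<and> (\<exists>i\<in>S. \<not> x i)"

definition mixed_count :: "('a \<Rightarrow> bool) \<Rightarrow> 'a set set \<Rightarrow> nat" where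
  "mixed_count x M = card {S \<in> M. mixed x S}"

lemma mixed_doubleton: "mixed x {p, q} \<longleftrightarrow> x p \<noteq> x q"
  unfolding mixed_def by auto

lemma mixed_count_insert:
  "finite M \<Longrightarrow> S \<notin> M \<Longrightarrow> mixed_count x (insert S M) = of_bool (mixed x S) + mixed_count x M"
proof -
  assume "finite M" "S \<notin> M"
  moreover have "{T \<in> insert S M. mixed x T}
      = (if mixed x S then insert S {T \<in> M. mixed x T} else {T \<in> M. mixed x T})"
    by auto
  ultimately show ?thesis unfolding mixed_count_def by simp
qed

lemma mixed_count_remove:
  "finite M \<Longrightarrow> S \<in> M \<Longrightarrow> mixed_count x M = of_bool (mixed x S) + mixed_count x (M - {S})"
  using mixed_count_insert[of "M - {S}" S x] by (simp add: insert_absorb)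

lemma mixed_count_le_card: "finite M \<Longrightarrow> mixed_count x M \<le> card M"
  unfolding mixed_count_def by (intro card_mono) auto

lemma mixed_count_const:
  assumes "M \<in> pair_partitions J" "\<forall>i\<in>J. x i = c"
  shows "mixed_count x M = 0"
proof -
  have "\<not> mixed x S" if "S \<in> M" for S
    using that assms pair_partition_Union[OF assms(1)] unfolding mixed_def by blast
  then show ?thesis unfolding mixed_count_def card_eq_0_iff by blast
qed

lemma mixed_count_flip:
  assumes M: "M \<in> pair_partitions J" and S: "S \<in> M"
  shows "mixed_count (flip x S) M = mixed_count x M"
proof -
  have "mixed (flip x S) T \<longleftrightarrow> mixed x T" if "T \<in> M" for T
  proof (cases "T = S")
    case True
    then show ?thesis unfolding mixed_def flip_def by auto
  next
    case False
    then have "\<forall>i\<in>T. flip x S i = x i"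
      using pair_partition_disjoint[OF M S that] unfolding flip_def by auto
    then show ?thesis unfolding mixed_def by auto
  qed
  then show ?thesis unfolding mixed_count_def by (metis (mono_tags, lifting) Collect_cong)
qed

lemma even_mixed_count_iff:
  assumes fin: "finite J" and M: "M \<in> pair_partitions J"
  shows "even (mixed_count x M) \<longleftrightarrow> even (weight J x)"
proof -
  have blocks: "odd (card {i \<in> S. x i}) \<longleftrightarrow> mixed x S" if S: "S \<in> M" for S
  proof -
    obtain p q where "p \<noteq> q" "S = {p, q}"
      using pair_partition_card_block[OF M S] by (auto simp: card_2_iff)
    moreover have "{i \<in> {p, q}. x i} = (if x p then {p} else {}) \<union> (if x q then {q} else {})"
      by auto
    ultimately show ?thesis by (simp add: mixed_doubleton)
  qed
  have "weight J x = card (\<Union>S\<in>M. {i \<in> S. x i})"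
    unfolding weight_def pair_partition_Union[OF M, symmetric] by (rule arg_cong[where f = card]) blast
  also have "\<dots> = (\<Sum>S\<in>M. card {i \<in> S. x i})"
    using finite_pair_partition[OF fin M] finite_pair_partition_block[OF M]
      pair_partition_disjoint[OF M]
    by (intro card_UN_disjoint) auto
  finally have "even (weight J x) \<longleftrightarrow> even (card {S \<in> M. odd (card {i \<in> S. x i})})"
    using finite_pair_partition[OF fin M] by (simp add: even_sum_iff)
  also have "{S \<in> M. odd (card {i \<in> S. x i})} = {S \<in> M. mixed x S}"
    using blocks by blast
  finally show ?thesis unfolding mixed_count_def by simp
qed

text \<open>
  The solution of the recurrence in \<open>mixing_coeff_rec\<close> with initial value \<open>1\<close>:
  \<open>mixing_coeff n (2 * j) = (-1)^j (2j - 1)!! / ((n - 2) (n - 4) \<dots> (n - 2 * j))\<close>, odd terms vanish.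
\<close>

fun mixing_coeff :: "nat \<Rightarrow> nat \<Rightarrow> rat" where
  "mixing_coeff n 0 = 1"
| "mixing_coeff n (Suc 0) = 0"
| "mixing_coeff n (Suc (Suc k)) = - (of_nat (k + 1) / of_nat (n - 2 - k)) * mixing_coeff n k"

lemma mixing_coeff_rec:
  assumes "k + 1 < n"
  shows "of_nat (n - 1 - k) * mixing_coeff n (k + 1) + of_nat k * mixing_coeff n (k - 1) = 0"
proof (cases k)
  case (Suc j)
  then have "n - 1 - k = n - 2 - j" "n - 2 - j > 0" using assms by simp_all
  then show ?thesis using Suc by (simp add: field_simps)
qed simp

lemma abs_mixing_coeff_le_1: "2 * k \<le> n \<Longrightarrow> \<bar>mixing_coeff n k\<bar> \<le> 1"
proof (induction n k rule: mixing_coeff.induct)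
  case (3 n k)
  then have "of_nat (k + 1) / of_nat (n - 2 - k) \<le> (1::rat)" "\<bar>mixing_coeff n k\<bar> \<le> 1"
    by simp_all
  have "\<bar>mixing_coeff n (Suc (Suc k))\<bar> = of_nat (k + 1) / of_nat (n - 2 - k) * \<bar>mixing_coeff n k\<bar>"
    by (simp add: abs_mult)
  also have "\<dots> \<le> 1"
    using \<open>of_nat (k + 1) / of_nat (n - 2 - k) \<le> 1\<close> \<open>\<bar>mixing_coeff n k\<bar> \<le> 1\<close>
    by (intro mult_le_one) auto
  finally show ?case .
qed auto

lemma mixed_count_rewire:
  assumes fin: "finite J" and M: "M \<in> pair_partitions (J - {a, z})" "{b, d} \<in> M" "b \<noteq> d"
    and "a \<noteq> z"
  shows "mixed_count x (rewire a z M {b, d} b)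
    = of_bool (x a \<noteq> x b) + of_bool (x z \<noteq> x d) + mixed_count x (M - {{b, d}})"
proof -
  have fin_M: "finite (M - {{b, d}})" using finite_pair_partition[OF _ M(1)] fin by simp
  have outside: "a \<notin> T" "z \<notin> T" if "T \<in> M" for T
    using that pair_partition_Union[OF M(1)] by blast+
  then have "{z, d} \<notin> M - {{b, d}}" "{a, b} \<notin> insert {z, d} (M - {{b, d}})"
    using \<open>a \<noteq> z\<close> outside[OF M(2)] by (auto simp: doubleton_eq_iff)
  then show ?thesis
    using fin_M M(3) by (simp add: rewire_doubleton mixed_count_insert mixed_doubleton)
qed

lemma sum_mixing_coeff_rewire_block:
  assumes fin: "finite J" and M: "M \<in> pair_partitions (J - {a, z})" "S \<in> M"
    and "a \<noteq> z" "x a" "\<not> x z"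
  shows "(\<Sum>b\<in>S. mixing_coeff n (mixed_count x (rewire a z M S b)))
    = 2 * mixing_coeff n (mixed_count x M + 1)
      + (if mixed x S
         then mixing_coeff n (mixed_count x M - 1) - mixing_coeff n (mixed_count x M + 1) else 0)"
proof -
  obtain p q where pq: "p \<noteq> q" "S = {p, q}"
    using pair_partition_card_block[OF M] by (auto simp: card_2_iff)
  define r where "r = mixed_count x (M - {S})"
  have fin_M: "finite M" using finite_pair_partition[OF _ M(1)] fin by simp
  have "mixed_count x M = of_bool (x p \<noteq> x q) + r"
    unfolding r_def pq(2)[symmetric] mixed_count_remove[OF fin_M M(2)]
    using pq by (simp add: mixed_doubleton)
  moreover have "mixed_count x (rewire a z M S p) = of_bool (\<not> x p) + of_bool (x q) + r"
    using mixed_count_rewire[OF fin M(1) _ pq(1) \<open>a \<noteq> z\<close>, of x] M(2) pq assms(5,6)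
    unfolding r_def by simp
  moreover have "mixed_count x (rewire a z M S q) = of_bool (\<not> x q) + of_bool (x p) + r"
    using mixed_count_rewire[OF fin M(1) _ pq(1)[symmetric] \<open>a \<noteq> z\<close>, of x] M(2) pq assms(5,6)
    unfolding r_def by (simp add: insert_commute)
  ultimately show ?thesis
    using pq by (cases "x p"; cases "x q") (simp_all add: mixed_doubleton)
qed

lemma sum_mixing_coeff_mixed_count:
  assumes fin: "finite J" and a: "a \<in> J" "x a" and z: "z \<in> J" "\<not> x z"
  shows "(\<Sum>M\<in>pair_partitions J. mixing_coeff (card J) (mixed_count x M)) = 0"
proof -
  define n where "n = card J"
  let ?c = "mixing_coeff n"
  have az: "a \<noteq> z" using a z by auto
  have card_J': "card (J - {a, z}) = n - 2" and "n \<ge> 2"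
    unfolding n_def using a z az fin card_mono[OF fin, of "{a, z}"] by (simp_all add: card_Diff_subset)
  have "?c (mixed_count x (insert {a, z} M))
      + (\<Sum>S\<in>M. \<Sum>b\<in>S. ?c (mixed_count x (rewire a z M S b))) = 0"
    if M: "M \<in> pair_partitions (J - {a, z})" for M
  proof -
    define k where "k = mixed_count x M"
    have fin_M: "finite M" using finite_pair_partition[OF _ M] fin by simp
    have n: "n = 2 * card M + 2"
      using card_pair_partition[OF _ M] card_J' \<open>n \<ge> 2\<close> fin by simp
    have k: "k \<le> card M" unfolding k_def using fin_M by (rule mixed_count_le_card)
    have "{a, z} \<notin> M" using pair_partition_Union[OF M] by blast
    then have insert: "mixed_count x (insert {a, z} M) = k + 1"
      using fin_M a(2) z(2) by (simp add: mixed_count_insert mixed_doubleton k_def)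
    have "(\<Sum>S\<in>M. \<Sum>b\<in>S. ?c (mixed_count x (rewire a z M S b)))
        = (\<Sum>S\<in>M. 2 * ?c (k + 1) + (if mixed x S then ?c (k - 1) - ?c (k + 1) else 0))"
      unfolding k_def using sum_mixing_coeff_rewire_block[OF fin M _ az a(2) z(2)]
      by (rule sum.cong[OF refl])
    also have "\<dots> = of_nat (card M) * (2 * ?c (k + 1)) + of_nat k * (?c (k - 1) - ?c (k + 1))"
      using fin_M by (simp add: sum.distrib sum.inter_filter[symmetric] k_def mixed_count_def)
    finally have "?c (mixed_count x (insert {a, z} M))
        + (\<Sum>S\<in>M. \<Sum>b\<in>S. ?c (mixed_count x (rewire a z M S b)))
        = (2 * of_nat (card M) + 1 - of_nat k) * ?c (k + 1) + of_nat k * ?c (k - 1)"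
      unfolding insert by (simp add: algebra_simps)
    also have "2 * of_nat (card M) + 1 - of_nat k = (of_nat (n - 1 - k) :: rat)"
      using k n by (simp add: of_nat_diff)
    also have "of_nat (n - 1 - k) * ?c (k + 1) + of_nat k * ?c (k - 1) = 0"
      using k n by (intro mixing_coeff_rec) simp
    finally show ?thesis .
  qed
  then show ?thesis
    unfolding n_def[symmetric] sum_pair_partitions_split[OF fin az a(1) z(1)]
    by (simp add: sum.neutral)
qed

lemma EvenNAE_eq:
  assumes "finite J"
  shows "EvenNAE J x = (if even (weight J x) \<and> (\<exists>a\<in>J. x a) \<and> (\<exists>z\<in>J. \<not> x z) then 1 else 0)"
proof -
  have "1 \<le> weight J x \<longleftrightarrow> (\<exists>a\<in>J. x a)"
    unfolding weight_def using assms by (auto simp: Suc_le_eq card_gt_0_iff)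
  moreover have "weight J x \<le> card J - 1 \<longleftrightarrow> (\<exists>z\<in>J. \<not> x z)" if "\<exists>a\<in>J. x a"
  proof -
    have "weight J x \<le> card J" unfolding weight_def using assms by (intro card_mono) auto
    moreover have "weight J x = card J \<longleftrightarrow> {i \<in> J. x i} = J"
      unfolding weight_def using assms card_subset_eq[of J "{i \<in> J. x i}"] by auto
    moreover have "card J > 0" using that assms by (auto simp: card_gt_0_iff)
    ultimately show ?thesis by auto
  qed
  ultimately show ?thesis unfolding EvenNAE_def by auto
qed

definition nae_decomposition :: "'a set \<Rightarrow> ('a \<Rightarrow> bool) \<Rightarrow> 'a set set \<Rightarrow> rat" where
  "nae_decomposition J x M =
    (if even (mixed_count x M)
     then (1 - mixing_coeff (card J) (mixed_count x M)) / of_nat (card (pair_partitions J))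
     else 0)"

lemma nae_decomposition_nonneg:
  assumes "finite J" "M \<in> pair_partitions J"
  shows "nae_decomposition J x M \<ge> 0"
proof -
  have "2 * mixed_count x M \<le> card J"
    using card_pair_partition[OF assms] mixed_count_le_card[OF finite_pair_partition[OF assms]]
    by simp
  then show ?thesis
    unfolding nae_decomposition_def using abs_mixing_coeff_le_1 by (simp add: abs_le_iff)
qed

lemma nae_decomposition_flip:
  "M \<in> pair_partitions J \<Longrightarrow> S \<in> M \<Longrightarrow> nae_decomposition J (flip x S) M = nae_decomposition J x M"
  unfolding nae_decomposition_def by (simp add: mixed_count_flip)

lemma sum_nae_decomposition:
  assumes fin: "finite J" and "even (card J)"
  shows "(\<Sum>M\<in>pair_partitions J. nae_decomposition J x M) = EvenNAE J x"
proof (cases "(\<exists>a\<in>J. x a) \<and> (\<exists>z\<in>J. \<not> x z)")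
  case True
  show ?thesis
  proof (cases "even (weight J x)")
    case True
    let ?C = "card (pair_partitions J)"
    have "?C > 0"
      using pair_partitions_nonempty[OF assms] finite_pair_partitions[OF fin] by (simp add: card_gt_0_iff)
    have "(\<Sum>M\<in>pair_partitions J. nae_decomposition J x M)
        = (\<Sum>M\<in>pair_partitions J. 1 - mixing_coeff (card J) (mixed_count x M)) / of_nat ?C"
      unfolding nae_decomposition_def sum_divide_distrib
      using even_mixed_count_iff[OF fin] True by (intro sum.cong) auto
    also have "\<dots> = 1"
      using sum_mixing_coeff_mixed_count[OF fin] \<open>?C > 0\<close> \<open>(\<exists>a\<in>J. x a) \<and> _\<close>
      by (auto simp: sum_subtractf)
    finally show ?thesis using fin \<open>(\<exists>a\<in>J. x a) \<and> _\<close> True by (simp add: EvenNAE_eq)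
  next
    case False
    then show ?thesis
      using even_mixed_count_iff[OF fin] by (simp add: nae_decomposition_def EvenNAE_eq fin)
  qed
next
  case False
  then obtain c where c: "\<forall>i\<in>J. x i = c" by blast
  have "nae_decomposition J x M = 0" if "M \<in> pair_partitions J" for M
    using mixed_count_const[OF that c] by (simp add: nae_decomposition_def)
  then show ?thesis using False by (simp add: EvenNAE_eq fin)
qed

theorem lemma12:
  fixes J :: "'a set"
  assumes "finite J" and "even (card J)"
  shows "has_2_decomposition J (EvenNAE J)"
  unfolding has_2_decomposition_def
proof (intro exI conjI ballI)
  fix x M assume "M \<in> pair_partitions J"
  then show "nae_decomposition J x M \<ge> 0" by (rule nae_decomposition_nonneg[OF assms(1)])
next
  fix x show "EvenNAE J x = (\<Sum>M\<in>pair_partitions J. nae_decomposition J x M)"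
    using sum_nae_decomposition[OF assms] by simp
next
  fix x M S assume "M \<in> pair_partitions J" "S \<in> M"
  then show "nae_decomposition J (flip x S) M = nae_decomposition J x M"
    by (rule nae_decomposition_flip)
qed

end
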